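(* The consecutive patterns $110$ and $100$ are super-strongly Wilf equivalent.
   Context: An inversion sequence of length $n$ is an integer sequence $e=e_1\dots e_n$ with $0\le e_i<i$ for all $i$; $\mathbf{I}_n$ denotes the set of these. $\mathrm{Em}(110,e)$ is the set of $i$ with $e_i=e_{i+1}>e_{i+2}$, and $\mathrm{Em}(100,e)$ the set of $i$ with $e_i>e_{i+1}=e_{i+2}$. Two consecutive patterns $p,p'$ are super-strongly Wilf equivalent if $|\{e\in\mathbf{I}_n:\mathrm{Em}(p,e)=T\}|=|\{e\in\mathbf{I}_n:\mathrm{Em}(p',e)=T\}|$ for all $n$ and all $T\subseteq[n]$. *)

theory Defs
  imports Main
begin

text \<open>Inversion sequences of length n, stored as lists; the paper's e_i is e ! (i - 1).\<close>
definition inv_seqs :: "nat \<Rightarrow> nat list set" where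
  "inv_seqs n = {e. length e = n \<and> (\<forall>i<n. e ! i < i + 1)}"

definition Em110 :: "nat list \<Rightarrow> nat set" where
  "Em110 e = {i. 1 \<le> i \<and> i + 2 \<le> length e \<and>
      e ! (i - 1) = e ! i \<and> e ! i > e ! (i + 1)}"

definition Em100 :: "nat list \<Rightarrow> nat set" where
  "Em100 e = {i. 1 \<le> i \<and> i + 2 \<le> length e \<and>
      e ! (i - 1) > e ! i \<and> e ! i = e ! (i + 1)}"

end

theory Submission
  imports Defs "HOL-Library.Multiset"
begin

text \<open>Encode a nonempty sequence by its first entry, its word of steps (\<open>Flat\<close>, \<open>Down\<close>, \<open>Up\<close>)
  between consecutive entries, and the list of entries reached by the non-\<open>Flat\<close> steps. An
  occurrence of 110 (resp. 100) at position \<open>i\<close> is a factor \<open>Flat Down\<close> (resp. \<open>Down Flat\<close>) of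
  the step word at position \<open>i - 1\<close>. Between two \<open>Up\<close> steps the step word is a word in \<open>Flat\<close>
  and \<open>Down\<close>; on each such run apply an involution that keeps the number of \<open>Down\<close> letters and
  turns every factor \<open>Flat Down\<close> into \<open>Down Flat\<close> in place. The same list of entries then
  realises the new step word, so this is a bijection exchanging the two pattern sets. It keeps
  inversion sequences, because an entry inside a run never exceeds the entry where the run
  starts, which is an entry of the original sequence at an earlier or equal position.\<close>

definition adjacent_positions :: "'a \<Rightarrow> 'a \<Rightarrow> 'a list \<Rightarrow> nat set" where
  "adjacent_positions u v w = {i. Suc i < length w \<and> w ! i = u \<and> w ! Suc i = v}"

lemma adjacent_positions_append:
  "adjacent_positions u v (w @ w') =
     adjacent_positions u v w \<union> (\<lambda>i. i + length w) ` adjacent_positions u v w' \<union>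
     {i. w \<noteq> [] \<and> w' \<noteq> [] \<and> i = length w - 1 \<and> last w = u \<and> hd w' = v}" (is "?l = ?r")
proof (intro set_eqI iffI)
  fix i assume i: "i \<in> ?l"
  consider "Suc i < length w" | "Suc i = length w" | "length w \<le> i" by linarith
  then show "i \<in> ?r"
  proof cases
    case 2
    then have "last w = w ! i" by (cases w) (auto simp: last_conv_nth)
    then show ?thesis using 2 i by (auto simp: adjacent_positions_def nth_append hd_conv_nth)
  next
    case 3
    then have "i - length w \<in> adjacent_positions u v w'"
      using i by (auto simp: adjacent_positions_def nth_append Suc_diff_le)
    then show ?thesis using 3 by (auto intro!: image_eqI[of _ _ "i - length w"])
  qed (use i in \<open>auto simp: adjacent_positions_def nth_append last_conv_nth hd_conv_nth\<close>)
qed (auto simp: adjacent_positions_def nth_append last_conv_nth hd_conv_nth)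

lemma adjacent_positions_inner:
  "adjacent_positions u v w = {i. Suc i \<in> adjacent_positions u v (a # w @ [c]) \<and> Suc i < length w}"
  by (auto simp: adjacent_positions_def nth_append)

definition blocks :: "'a \<Rightarrow> 'a \<Rightarrow> (nat \<times> nat) list \<Rightarrow> 'a list" where
  "blocks x y S = concat (map (\<lambda>(a, b). replicate a x @ replicate b y) S)"

definition proper_blocks :: "(nat \<times> nat) list \<Rightarrow> bool" where
  "proper_blocks S \<longleftrightarrow> (\<forall>(a, b) \<in> set S. 0 < a \<and> 0 < b)"

lemma blocks_Nil [simp]: "blocks x y [] = []"
  by (simp add: blocks_def)

lemma blocks_Cons [simp]:
  "blocks x y (ab # S) = replicate (fst ab) x @ replicate (snd ab) y @ blocks x y S"
  by (simp add: blocks_def split_beta)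

lemma proper_blocks_Nil [simp]: "proper_blocks []"
  by (simp add: proper_blocks_def)

lemma proper_blocks_Cons [simp]:
  "proper_blocks (ab # S) \<longleftrightarrow> 0 < fst ab \<and> 0 < snd ab \<and> proper_blocks S"
  by (auto simp: proper_blocks_def)

lemma proper_blocks_swap: "proper_blocks (map prod.swap S) \<longleftrightarrow> proper_blocks S"
  by (induction S) auto

lemma blocks_eq_Nil_iff: "proper_blocks S \<Longrightarrow> blocks x y S = [] \<longleftrightarrow> S = []"
  by (cases S) auto

lemma hd_blocks: "proper_blocks S \<Longrightarrow> S \<noteq> [] \<Longrightarrow> hd (blocks x y S) = x"
  by (cases S) auto

lemma last_blocks: "proper_blocks S \<Longrightarrow> S \<noteq> [] \<Longrightarrow> last (blocks x y S) = y"
  by (induction S) (auto simp: blocks_eq_Nil_iff last_append)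

lemma mset_blocks_swap: "mset (blocks y x (map prod.swap S)) = mset (blocks x y S)"
  by (induction S) (auto simp: ac_simps)

lemma blocks_decomposition:
  assumes "x \<noteq> y" "set w \<subseteq> {x, y}" "w = [] \<or> last w = y"
  shows "\<exists>S b. proper_blocks S \<and> w = replicate b y @ blocks x y S"
  using assms(2,3)
proof (induction w)
  case Nil
  show ?case by (rule exI[of _ "[]"], rule exI[of _ 0]) simp
next
  case (Cons u w)
  then obtain S b where S: "proper_blocks S" "w = replicate b y @ blocks x y S"
    by (cases "w = []") auto
  consider "u = y" | "u = x" "b = 0" | "u = x" "0 < b"
    using Cons.prems by auto
  then show ?case
  proof cases
    case 1
    then show ?thesis using S by (intro exI[of _ S] exI[of _ "Suc b"]) simp
  next
    case 2
    with Cons.prems S assms(1) have "S \<noteq> []" by auto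
    then obtain a c S' where "S = (a, c) # S'" by (cases S) auto
    then show ?thesis using 2 S by (intro exI[of _ "(Suc a, c) # S'"] exI[of _ 0]) simp
  next
    case 3
    then show ?thesis using S by (intro exI[of _ "(1, b) # S"] exI[of _ 0]) simp
  qed
qed

lemma adjacent_positions_blocks_swap:
  assumes "x \<noteq> y" "proper_blocks S"
  shows "adjacent_positions x y (blocks y x (map prod.swap S)) = adjacent_positions y x (blocks x y S)"
  using assms(2)
proof (induction S)
  case Nil
  then show ?case by (simp add: adjacent_positions_def)
next
  case (Cons ab S)
  obtain a b where ab: "ab = (a, b)" by fastforce
  with Cons.prems have pos: "0 < a" "0 < b" and S: "proper_blocks S" by auto
  define X where "X = replicate a x @ replicate b y"
  define Y where "Y = replicate b y @ replicate a x"
  have X: "X \<noteq> []" "last X = y" "length X = a + b" "adjacent_positions y x X = {}"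
    using pos assms(1) by (auto simp: X_def adjacent_positions_def nth_append)
  have Y: "Y \<noteq> []" "last Y = x" "length Y = a + b" "adjacent_positions x y Y = {}"
    using pos assms(1) by (auto simp: Y_def adjacent_positions_def nth_append)
  have XS: "blocks x y (ab # S) = X @ blocks x y S"
    and YS: "blocks y x (map prod.swap (ab # S)) = Y @ blocks y x (map prod.swap S)"
    using ab by (simp_all add: X_def Y_def)
  have "blocks x y S \<noteq> [] \<and> hd (blocks x y S) = x \<longleftrightarrow> S \<noteq> []"
    and "blocks y x (map prod.swap S) \<noteq> [] \<and> hd (blocks y x (map prod.swap S)) = y \<longleftrightarrow> S \<noteq> []"
    using S by (auto simp: blocks_eq_Nil_iff hd_blocks proper_blocks_swap)
  then show ?case
    unfolding XS YS adjacent_positions_append using Cons.IH[OF S] X Y by simp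
qed

text \<open>The pending block \<open>x\<^sup>a y\<^sup>b\<close> is emitted as \<open>y\<^sup>b x\<^sup>a\<close> when the next block starts.\<close>
fun swap_scan :: "'a \<Rightarrow> 'a \<Rightarrow> nat \<Rightarrow> nat \<Rightarrow> 'a list \<Rightarrow> 'a list" where
  "swap_scan x y a b [] = replicate b y @ replicate a x"
| "swap_scan x y a b (u # w) =
     (if u \<noteq> x then swap_scan x y a (Suc b) w
      else if b = 0 then swap_scan x y (Suc a) 0 w
      else replicate b y @ replicate a x @ swap_scan x y 1 0 w)"

lemma swap_scan_replicate_fst: "swap_scan x y a 0 (replicate k x @ w) = swap_scan x y (a + k) 0 w"
  by (induction k arbitrary: a) auto

lemma swap_scan_replicate_snd:
  "x \<noteq> y \<Longrightarrow> swap_scan x y a b (replicate k y @ w) = swap_scan x y a (b + k) w"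
  by (induction k arbitrary: b) auto

lemma swap_scan_blocks_pending:
  "x \<noteq> y \<Longrightarrow> proper_blocks S \<Longrightarrow> 0 < b \<Longrightarrow>
    swap_scan x y a b (blocks x y S) = replicate b y @ replicate a x @ blocks y x (map prod.swap S)"
proof (induction S arbitrary: a b)
  case (Cons ab S)
  then obtain k where "fst ab = Suc k" "0 < snd ab" "proper_blocks S"
    by (cases "fst ab") auto
  with Cons show ?case
    by (simp add: swap_scan_replicate_fst swap_scan_replicate_snd)
qed simp

lemma swap_scan_blocks:
  "x \<noteq> y \<Longrightarrow> proper_blocks S \<Longrightarrow> swap_scan x y 0 0 (blocks x y S) = blocks y x (map prod.swap S)"
  by (cases S) (auto simp: swap_scan_replicate_fst swap_scan_replicate_snd swap_scan_blocks_pending)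

text \<open>Padding by \<open>x\<close> and \<open>y\<close> makes the word a product of blocks \<open>x\<^sup>a y\<^sup>b\<close> with \<open>a, b > 0\<close>.
  Inside blocks it has factors \<open>x y\<close>, at block boundaries factors \<open>y x\<close>; swapping every block
  exchanges the two kinds of factor without moving them.\<close>
definition block_swap :: "'a \<Rightarrow> 'a \<Rightarrow> 'a list \<Rightarrow> 'a list" where
  "block_swap x y w = butlast (tl (swap_scan x y 0 0 (x # w @ [y])))"

lemma block_swap_padded:
  assumes "x \<noteq> y" "set w \<subseteq> {x, y}"
  obtains S where "proper_blocks S" "x # w @ [y] = blocks x y S"
    "y # block_swap x y w @ [x] = blocks y x (map prod.swap S)"
proof -
  obtain S b where S: "proper_blocks S" "x # w @ [y] = replicate b y @ blocks x y S"
    using blocks_decomposition[OF assms(1), of "x # w @ [y]"] assms by auto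
  have "b = 0" using S(2) assms(1) by (cases b) auto
  with S have w: "x # w @ [y] = blocks x y S" and "S \<noteq> []" by auto
  define R where "R = blocks y x (map prod.swap S)"
  have R: "hd R = y" "last R = x" "length R = Suc (Suc (length w))"
    using \<open>S \<noteq> []\<close> S(1) w arg_cong[OF mset_blocks_swap[of y x S], of size]
    by (auto simp: R_def hd_blocks last_blocks proper_blocks_swap w[symmetric])
  then obtain R' where "R = y # R'" "R' \<noteq> []" "last R' = x"
    by (cases R) (auto split: if_splits)
  then have "y # block_swap x y w @ [x] = R"
    using swap_scan_blocks[OF assms(1) S(1)] w append_butlast_last_id[of R']
    by (simp add: block_swap_def R_def)
  with S(1) w show thesis unfolding R_def by (rule that)
qed

lemma mset_block_swap:
  assumes "x \<noteq> y" "set w \<subseteq> {x, y}"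
  shows "mset (block_swap x y w) = mset w"
proof -
  obtain S where S: "x # w @ [y] = blocks x y S"
    "y # block_swap x y w @ [x] = blocks y x (map prod.swap S)"
    using block_swap_padded[OF assms] by blast
  have "mset (y # block_swap x y w @ [x]) = mset (x # w @ [y])"
    unfolding S by (rule mset_blocks_swap)
  then show ?thesis by (simp add: add_mset_commute)
qed

lemma length_block_swap: "x \<noteq> y \<Longrightarrow> set w \<subseteq> {x, y} \<Longrightarrow> length (block_swap x y w) = length w"
  by (metis mset_block_swap size_mset)

lemma set_block_swap: "x \<noteq> y \<Longrightarrow> set w \<subseteq> {x, y} \<Longrightarrow> set (block_swap x y w) = set w"
  by (metis mset_block_swap set_mset_mset)

lemma adjacent_positions_block_swap:
  assumes "x \<noteq> y" "set w \<subseteq> {x, y}"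
  shows "adjacent_positions x y (block_swap x y w) = adjacent_positions y x w"
proof -
  obtain S where S: "proper_blocks S" "x # w @ [y] = blocks x y S"
    "y # block_swap x y w @ [x] = blocks y x (map prod.swap S)"
    using block_swap_padded[OF assms] .
  have "adjacent_positions x y (block_swap x y w) =
      {i. Suc i \<in> adjacent_positions x y (y # block_swap x y w @ [x]) \<and> Suc i < length (block_swap x y w)}"
    by (rule adjacent_positions_inner)
  also have "\<dots> = {i. Suc i \<in> adjacent_positions y x (x # w @ [y]) \<and> Suc i < length w}"
    using adjacent_positions_blocks_swap[OF assms(1) S(1)] length_block_swap[OF assms]
    by (simp only: S(2,3))
  also have "\<dots> = adjacent_positions y x w"
    by (rule adjacent_positions_inner[symmetric])
  finally show ?thesis .
qed

lemma block_swap_block_swap: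
  assumes "x \<noteq> y" "set w \<subseteq> {x, y}"
  shows "block_swap y x (block_swap x y w) = w"
proof -
  obtain S where S: "proper_blocks S" "x # w @ [y] = blocks x y S"
    "y # block_swap x y w @ [x] = blocks y x (map prod.swap S)"
    using block_swap_padded[OF assms] .
  have "swap_scan y x 0 0 (y # block_swap x y w @ [x]) = x # w @ [y]"
    using swap_scan_blocks[of y x "map prod.swap S"] assms(1) S
    by (simp add: proper_blocks_swap comp_def)
  then show ?thesis by (simp add: block_swap_def)
qed

lemma adjacent_positions_separator:
  assumes "u \<noteq> c" "v \<noteq> c"
  shows "adjacent_positions u v (w @ c # r) =
    adjacent_positions u v w \<union> (\<lambda>i. i + Suc (length w)) ` adjacent_positions u v r"
proof -
  have "adjacent_positions u v (c # r) = (\<lambda>i. i + 1) ` adjacent_positions u v r"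
    using adjacent_positions_append[of u v "[c]" r] assms by (auto simp: adjacent_positions_def)
  then show ?thesis
    using adjacent_positions_append[of u v w "c # r"] assms by (auto simp: image_image)
qed

function map_runs :: "('a list \<Rightarrow> 'a list) \<Rightarrow> 'a \<Rightarrow> 'a list \<Rightarrow> 'a list" where
  "map_runs f c w =
    (if c \<in> set w
     then f (takeWhile (\<lambda>u. u \<noteq> c) w) @ c # map_runs f c (tl (dropWhile (\<lambda>u. u \<noteq> c) w))
     else f w)"
  by auto
termination
proof (relation "measure (\<lambda>(f, c, w). length w)")
  fix f :: "'a list \<Rightarrow> 'a list" and c w
  assume "c \<in> set w"
  then have "0 < length w" by (cases w) auto
  moreover have "length (dropWhile (\<lambda>u. u \<noteq> c) w) \<le> length w"
    by (rule length_dropWhile_le)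
  ultimately show "((f, c, tl (dropWhile (\<lambda>u. u \<noteq> c) w)), f, c, w) \<in> measure (\<lambda>(f, c, w). length w)"
    unfolding in_measure split length_tl by arith
qed simp

lemmas [simp del] = map_runs.simps

lemma map_runs_run: "c \<notin> set w \<Longrightarrow> map_runs f c w = f w"
  by (simp add: map_runs.simps)

lemma map_runs_separator: "c \<notin> set w \<Longrightarrow> map_runs f c (w @ c # r) = f w @ c # map_runs f c r"
  by (subst map_runs.simps) (simp add: takeWhile_append dropWhile_append)

lemma runs_induct [case_names run separator]:
  assumes "\<And>w. c \<notin> set w \<Longrightarrow> P w" "\<And>w r. c \<notin> set w \<Longrightarrow> P r \<Longrightarrow> P (w @ c # r)"
  shows "P u"
proof (induction u rule: length_induct)
  case (1 u)
  show ?case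
  proof (cases "c \<in> set u")
    case True
    then obtain w r where "u = w @ c # r" "c \<notin> set w"
      using split_list_first by fast
    then show ?thesis using 1 assms(2) by simp
  qed (use assms(1) in simp)
qed

context
  fixes f :: "'a list \<Rightarrow> 'a list" and c :: 'a
begin

lemma length_map_runs:
  "(\<And>w. c \<notin> set w \<Longrightarrow> length (f w) = length w) \<Longrightarrow> length (map_runs f c u) = length u"
  by (induction u rule: runs_induct[of c]) (simp_all add: map_runs_run map_runs_separator)

lemma filter_map_runs:
  "(\<And>w. c \<notin> set w \<Longrightarrow> filter P (f w) = filter P w) \<Longrightarrow> filter P (map_runs f c u) = filter P u"
  by (induction u rule: runs_induct[of c]) (simp_all add: map_runs_run map_runs_separator)

lemma map_runs_inverse:
  "(\<And>w. c \<notin> set w \<Longrightarrow> c \<notin> set (f w) \<and> g (f w) = w) \<Longrightarrow> map_runs g c (map_runs f c u) = u"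
  by (induction u rule: runs_induct[of c]) (simp_all add: map_runs_run map_runs_separator)

lemma adjacent_positions_map_runs:
  assumes "x \<noteq> c" "y \<noteq> c"
    and "\<And>w. c \<notin> set w \<Longrightarrow> length (f w) = length w \<and> adjacent_positions x y (f w) = adjacent_positions y x w"
  shows "adjacent_positions x y (map_runs f c u) = adjacent_positions y x u"
  by (induction u rule: runs_induct[of c])
     (simp_all add: map_runs_run map_runs_separator adjacent_positions_separator assms)

end

definition prefix_dominated :: "nat list \<Rightarrow> nat list \<Rightarrow> bool" where
  "prefix_dominated xs ys \<longleftrightarrow> length xs = length ys \<and> (\<forall>k<length xs. \<exists>i\<le>k. xs ! k \<le> ys ! i)"

lemma prefix_dominated_append:
  assumes "prefix_dominated xs ys" "prefix_dominated xs' ys'"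
  shows "prefix_dominated (xs @ xs') (ys @ ys')"
  unfolding prefix_dominated_def
proof (intro conjI allI impI)
  show "length (xs @ xs') = length (ys @ ys')"
    using assms by (simp add: prefix_dominated_def)
  fix k assume k: "k < length (xs @ xs')"
  show "\<exists>i\<le>k. (xs @ xs') ! k \<le> (ys @ ys') ! i"
  proof (cases "k < length xs")
    case True
    then show ?thesis using assms(1) by (fastforce simp: prefix_dominated_def nth_append)
  next
    case False
    then have "k - length xs < length xs'" using k by simp
    then obtain i where "i \<le> k - length xs" "xs' ! (k - length xs) \<le> ys' ! i"
      using assms(2) by (auto simp: prefix_dominated_def)
    then show ?thesis
      using False assms(1) by (intro exI[of _ "i + length xs"]) (auto simp: prefix_dominated_def nth_append)
  qed
qed

lemma prefix_dominated_inv_seqs: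
  assumes "prefix_dominated xs ys" "ys \<in> inv_seqs n"
  shows "xs \<in> inv_seqs n"
  unfolding inv_seqs_def
proof (intro CollectI conjI allI impI)
  show "length xs = n" using assms by (simp add: prefix_dominated_def inv_seqs_def)
  fix k assume "k < n"
  then obtain i where "i \<le> k" "xs ! k \<le> ys ! i"
    using assms by (auto simp: prefix_dominated_def inv_seqs_def)
  moreover have "ys ! i < i + 1"
    using assms(2) \<open>i \<le> k\<close> \<open>k < n\<close> by (simp add: inv_seqs_def)
  ultimately show "xs ! k < k + 1" by linarith
qed

datatype step = Flat | Down | Up

definition step_of :: "nat \<Rightarrow> nat \<Rightarrow> step" where
  "step_of u v = (if v = u then Flat else if v < u then Down else Up)"

fun steps :: "nat list \<Rightarrow> step list" where
  "steps (u # v # e) = step_of u v # steps (v # e)"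
| "steps _ = []"

fun jumps :: "nat list \<Rightarrow> nat list" where
  "jumps (u # v # e) = (if v = u then jumps (v # e) else v # jumps (v # e))"
| "jumps _ = []"

fun rebuild :: "nat \<Rightarrow> nat list \<Rightarrow> step list \<Rightarrow> nat list" where
  "rebuild p vs [] = [p]"
| "rebuild p vs (Flat # U) = p # rebuild p vs U"
| "rebuild p [] (s # U) = p # rebuild p [] U"
| "rebuild p (v # vs) (s # U) = p # rebuild v vs U"

fun realises :: "nat \<Rightarrow> nat list \<Rightarrow> step list \<Rightarrow> bool" where
  "realises p vs [] \<longleftrightarrow> vs = []"
| "realises p vs (Flat # U) \<longleftrightarrow> realises p vs U"
| "realises p [] (s # U) \<longleftrightarrow> False"
| "realises p (v # vs) (Down # U) \<longleftrightarrow> v < p \<and> realises v vs U"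
| "realises p (v # vs) (Up # U) \<longleftrightarrow> p < v \<and> realises v vs U"

lemma steps_Cons: "e \<noteq> [] \<Longrightarrow> steps (u # e) = step_of u (hd e) # steps e"
  by (cases e) auto

lemma jumps_Cons: "e \<noteq> [] \<Longrightarrow> jumps (u # e) = (if hd e = u then jumps e else hd e # jumps e)"
  by (cases e) auto

lemma rebuild_steps_jumps: "e \<noteq> [] \<Longrightarrow> rebuild (hd e) (jumps e) (steps e) = e"
  by (induction e rule: steps.induct) (auto simp: step_of_def)

lemma realises_steps_jumps: "e \<noteq> [] \<Longrightarrow> realises (hd e) (jumps e) (steps e)"
  by (induction e rule: steps.induct) (auto simp: step_of_def)

lemma length_rebuild [simp]: "length (rebuild p vs U) = Suc (length U)"
  by (induction p vs U rule: rebuild.induct) auto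

lemma hd_rebuild [simp]: "hd (rebuild p vs U) = p"
  by (cases "(p, vs, U)" rule: rebuild.cases) auto

lemma rebuild_not_Nil [simp]: "rebuild p vs U \<noteq> []"
  by (cases "(p, vs, U)" rule: rebuild.cases) auto

lemma steps_rebuild: "realises p vs U \<Longrightarrow> steps (rebuild p vs U) = U"
  by (induction p vs U rule: rebuild.induct) (auto simp: step_of_def steps_Cons)

lemma jumps_rebuild: "realises p vs U \<Longrightarrow> jumps (rebuild p vs U) = vs"
  by (induction p vs U rule: rebuild.induct) (auto simp: jumps_Cons)

lemma realises_iff_filter: "realises p vs U \<longleftrightarrow> realises p vs (filter (\<lambda>s. s \<noteq> Flat) U)"
  by (induction p vs U rule: rebuild.induct) auto

lemma length_jumps_if_realises: "realises p vs U \<Longrightarrow> length vs = length (filter (\<lambda>s. s \<noteq> Flat) U)"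
  by (induction p vs U rule: rebuild.induct) auto

lemma rebuild_separator:
  "length vs = length (filter (\<lambda>s. s \<noteq> Flat) w) \<Longrightarrow>
    rebuild p (vs @ v # vs') (w @ Up # r) = rebuild p vs w @ rebuild v vs' r"
  by (induction p vs w rule: rebuild.induct) auto

lemma realises_separator:
  "length vs = length (filter (\<lambda>s. s \<noteq> Flat) w) \<Longrightarrow>
    realises p (vs @ v # vs') (w @ Up # r) \<longleftrightarrow> realises p vs w \<and> last (rebuild p vs w) < v \<and> realises v vs' r"
  by (induction p vs w rule: rebuild.induct) auto

lemma rebuild_le_start:
  "realises p vs U \<Longrightarrow> Up \<notin> set U \<Longrightarrow> u \<in> set (rebuild p vs U) \<Longrightarrow> u \<le> p"
  by (induction p vs U rule: rebuild.induct) fastforce+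

lemma prefix_dominated_by_start:
  assumes "length xs = length ys" "ys \<noteq> []" "\<forall>u \<in> set xs. u \<le> hd ys"
  shows "prefix_dominated xs ys"
  using assms by (auto simp: prefix_dominated_def hd_conv_nth intro!: exI[of _ 0])

lemma prefix_dominated_rebuild_Up_free:
  assumes "realises p vs U'" "Up \<notin> set U'" "length U' = length U"
  shows "prefix_dominated (rebuild p vs U') (rebuild p vs'' U)"
  using assms rebuild_le_start[OF assms(1,2)] by (simp add: prefix_dominated_by_start)

lemma prefix_dominated_rebuild_map_runs:
  assumes f: "\<And>w. Up \<notin> set w \<Longrightarrow> Up \<notin> set (f w) \<and> length (f w) = length w \<and>
      filter (\<lambda>s. s \<noteq> Flat) (f w) = filter (\<lambda>s. s \<noteq> Flat) w"
  shows "realises p vs U \<Longrightarrow> prefix_dominated (rebuild p vs (map_runs f Up U)) (rebuild p vs U)"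
proof (induction U arbitrary: p vs rule: runs_induct[of Up])
  case (run w)
  then have "realises p vs (f w)"
    using f by (metis realises_iff_filter)
  then show ?case
    using f run.hyps by (simp add: map_runs_run prefix_dominated_rebuild_Up_free)
next
  case (separator w r)
  define k where "k = length (filter (\<lambda>s. s \<noteq> Flat) w)"
  have "k < length vs"
    using length_jumps_if_realises[OF separator.prems] by (simp add: k_def)
  then obtain v vs' where vs: "vs = take k vs @ v # vs'"
    by (metis Cons_nth_drop_Suc append_take_drop_id)
  have k: "length (take k vs) = length (filter (\<lambda>s. s \<noteq> Flat) w)"
    "length (take k vs) = length (filter (\<lambda>s. s \<noteq> Flat) (f w))"
    using \<open>k < length vs\<close> f separator.hyps(1) by (simp_all add: k_def)
  have "realises v vs' r"
    using separator.prems realises_separator[OF k(1)] vs by metis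
  then have "prefix_dominated (rebuild v vs' (map_runs f Up r)) (rebuild v vs' r)"
    by (rule separator.IH)
  moreover have "realises p (take k vs) (f w)"
    using separator.prems realises_separator[OF k(1)] vs f[OF separator.hyps(1)]
    by (metis realises_iff_filter)
  then have "prefix_dominated (rebuild p (take k vs) (f w)) (rebuild p (take k vs) w)"
    using f separator.hyps(1) by (simp add: prefix_dominated_rebuild_Up_free)
  ultimately show ?case
    using vs rebuild_separator[OF k(1)] rebuild_separator[OF k(2)] separator.hyps
    by (metis map_runs_separator prefix_dominated_append)
qed

definition run_swap :: "step \<Rightarrow> step \<Rightarrow> step list \<Rightarrow> step list" where
  "run_swap x y = map_runs (block_swap x y) Up"

definition run_swap_seq :: "step \<Rightarrow> step \<Rightarrow> nat list \<Rightarrow> nat list" where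
  "run_swap_seq x y e = (if e = [] then [] else rebuild (hd e) (jumps e) (run_swap x y (steps e)))"

context
  fixes x y :: step
  assumes xy: "{x, y} = {Flat, Down}"
begin

lemma block_swap_Up_free:
  assumes "Up \<notin> set w"
  shows "Up \<notin> set (block_swap x y w)" "length (block_swap x y w) = length w"
    "filter (\<lambda>s. s \<noteq> Flat) (block_swap x y w) = filter (\<lambda>s. s \<noteq> Flat) w"
    "adjacent_positions x y (block_swap x y w) = adjacent_positions y x w"
    "block_swap y x (block_swap x y w) = w"
proof -
  have "Flat \<in> {x, y}" "Down \<in> {x, y}"
    unfolding xy by simp_all
  then have "x \<noteq> y" by auto
  have w: "set w \<subseteq> {x, y}"
  proof
    fix s assume "s \<in> set w"
    with assms show "s \<in> {x, y}" unfolding xy by (cases s) auto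
  qed
  show "Up \<notin> set (block_swap x y w)" "length (block_swap x y w) = length w"
    "adjacent_positions x y (block_swap x y w) = adjacent_positions y x w"
    "block_swap y x (block_swap x y w) = w"
    using assms \<open>x \<noteq> y\<close> w by (simp_all add: set_block_swap length_block_swap adjacent_positions_block_swap
        block_swap_block_swap)
  have Down_filter: "filter (\<lambda>s. s \<noteq> Flat) u = filter ((=) Down) u" if "Up \<notin> set u" for u
    using that by (intro filter_cong) (auto, metis step.exhaust)
  show "filter (\<lambda>s. s \<noteq> Flat) (block_swap x y w) = filter (\<lambda>s. s \<noteq> Flat) w"
    using mset_block_swap[OF \<open>x \<noteq> y\<close> w] set_block_swap[OF \<open>x \<noteq> y\<close> w] assms
    by (simp add: Down_filter replicate_count_mset_eq_filter_eq[symmetric])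
qed

lemma length_run_swap: "length (run_swap x y U) = length U"
  unfolding run_swap_def by (rule length_map_runs) (rule block_swap_Up_free)

lemma filter_run_swap:
  "filter (\<lambda>s. s \<noteq> Flat) (run_swap x y U) = filter (\<lambda>s. s \<noteq> Flat) U"
  unfolding run_swap_def by (rule filter_map_runs) (rule block_swap_Up_free)

lemma run_swap_run_swap: "run_swap y x (run_swap x y U) = U"
  unfolding run_swap_def by (rule map_runs_inverse) (simp add: block_swap_Up_free)

lemma adjacent_positions_run_swap: "adjacent_positions x y (run_swap x y U) = adjacent_positions y x U"
proof -
  have "x \<noteq> Up" "y \<noteq> Up"
    using xy by (auto simp: doubleton_eq_iff)
  then show ?thesis
    unfolding run_swap_def by (rule adjacent_positions_map_runs) (simp add: block_swap_Up_free)
qed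

lemma realises_run_swap: "realises p vs U \<Longrightarrow> realises p vs (run_swap x y U)"
  by (metis filter_run_swap realises_iff_filter)

lemma steps_run_swap_seq: "steps (run_swap_seq x y e) = run_swap x y (steps e)"
  using length_run_swap[of "[]"]
  by (cases "e = []") (simp_all add: run_swap_seq_def steps_rebuild realises_run_swap realises_steps_jumps)

lemma run_swap_seq_run_swap_seq: "run_swap_seq y x (run_swap_seq x y e) = e"
  by (cases "e = []")
    (simp_all add: run_swap_seq_def steps_rebuild jumps_rebuild realises_run_swap
      realises_steps_jumps run_swap_run_swap rebuild_steps_jumps)

lemma prefix_dominated_rebuild_run_swap:
  "realises p vs U \<Longrightarrow> prefix_dominated (rebuild p vs (run_swap x y U)) (rebuild p vs U)"
  unfolding run_swap_def by (rule prefix_dominated_rebuild_map_runs) (simp_all add: block_swap_Up_free)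

lemma run_swap_seq_inv_seqs: "e \<in> inv_seqs n \<Longrightarrow> run_swap_seq x y e \<in> inv_seqs n"
  using prefix_dominated_rebuild_run_swap[OF realises_steps_jumps, of e] rebuild_steps_jumps[of e]
  by (cases "e = []") (auto simp: run_swap_seq_def intro: prefix_dominated_inv_seqs)

end

lemma length_steps: "length (steps e) = length e - 1"
  by (induction e rule: steps.induct) auto

lemma nth_steps: "Suc j < length e \<Longrightarrow> steps e ! j = step_of (e ! j) (e ! Suc j)"
  by (induction e arbitrary: j rule: steps.induct) (auto simp: nth_Cons split: nat.split)

lemma Em110_steps: "Em110 e = Suc ` adjacent_positions Flat Down (steps e)"
proof -
  have "Suc j \<in> Em110 e \<longleftrightarrow> j \<in> adjacent_positions Flat Down (steps e)" for j
    by (auto simp: Em110_def adjacent_positions_def length_steps nth_steps step_of_def split: if_splits)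
  moreover have "0 \<notin> Em110 e"
    by (simp add: Em110_def)
  ultimately show ?thesis
    by (auto simp: image_iff) (metis not0_implies_Suc)
qed

lemma Em100_steps: "Em100 e = Suc ` adjacent_positions Down Flat (steps e)"
proof -
  have "Suc j \<in> Em100 e \<longleftrightarrow> j \<in> adjacent_positions Down Flat (steps e)" for j
    by (auto simp: Em100_def adjacent_positions_def length_steps nth_steps step_of_def split: if_splits)
  moreover have "0 \<notin> Em100 e"
    by (simp add: Em100_def)
  ultimately show ?thesis
    by (auto simp: image_iff) (metis not0_implies_Suc)
qed

theorem mainTheorem12:
  fixes n :: nat and T :: "nat set"
  assumes "T \<subseteq> {1..n}"
  shows "card {e \<in> inv_seqs n. Em110 e = T} = card {e \<in> inv_seqs n. Em100 e = T}"
proof -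
  have DF: "{Down, Flat} = {Flat, Down}" and FD: "{Flat, Down} = {Flat, Down}"
    by auto
  have "Em100 (run_swap_seq Down Flat e) = Em110 e" and "Em110 (run_swap_seq Flat Down e) = Em100 e" for e
    by (simp_all add: Em100_steps Em110_steps steps_run_swap_seq[OF DF] steps_run_swap_seq[OF FD]
        adjacent_positions_run_swap[OF DF] adjacent_positions_run_swap[OF FD])
  then have "bij_betw (run_swap_seq Down Flat) {e \<in> inv_seqs n. Em110 e = T} {e \<in> inv_seqs n. Em100 e = T}"
    by (intro bij_betw_byWitness[where f' = "run_swap_seq Flat Down"])
      (auto simp: run_swap_seq_run_swap_seq[OF DF] run_swap_seq_run_swap_seq[OF FD]
        run_swap_seq_inv_seqs[OF DF] run_swap_seq_inv_seqs[OF FD])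
  then show ?thesis
    by (rule bij_betw_same_card)
qed

end
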